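(* Let $g\in\mathcal{P}(\mathbb{R})$ be symmetric around $0$ with finite second moment, let $\beta,\sigma>0$ and $\gamma:=\beta+\sigma^2/2$. Then for every $\kappa$ with $0<\kappa<\kappa_P(g)$ the Penrose condition holds: there exists $\lambda\in(0,\sigma^2/2)$ such that $1-\frac{\kappa}{2}P(z)\ne0$ for all $z\in\mathbb{C}$ with $\Re(z)\in[-\lambda,\beta+\lambda]$.
   Context: For $z\in\mathbb{C}$ with $\Re(z)\in(-\sigma^2/2,\gamma)$, $P(z):=\int_{\mathbb{R}}\frac{g(\mathrm{d}\omega)}{(\gamma+i\omega-z)(\frac{\sigma^2}{2}+z-i\omega)}$. The Penrose constant is $\kappa_P(g):=\inf\{\kappa>0:\ \exists\theta\in\mathbb{R}\text{ such that }P(i\theta)=2/\kappa\}$. *)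

theory Defs
  imports "HOL-Probability.Probability"
begin

definition penroseP :: "real measure \<Rightarrow> real \<Rightarrow> real \<Rightarrow> complex \<Rightarrow> complex" where
  "penroseP g \<beta> \<sigma> z =
     (let \<gamma> = \<beta> + \<sigma>\<^sup>2 / 2 in
      LINT \<omega>|g. 1 / ((complex_of_real \<gamma> + \<i> * complex_of_real \<omega> - z) *
                     (complex_of_real (\<sigma>\<^sup>2 / 2) + z - \<i> * complex_of_real \<omega>)))"

text \<open>The Penrose constant, as an extended real (infimum of the empty set is +infinity).\<close>
definition kappaP :: "real measure \<Rightarrow> real \<Rightarrow> real \<Rightarrow> ereal" where
  "kappaP g \<beta> \<sigma> =
     Inf (ereal ` {\<kappa>::real. \<kappa> > 0 \<and>
         (\<exists>\<theta>::real. penroseP g \<beta> \<sigma> (\<i> * complex_of_real \<theta>) = complex_of_real (2 / \<kappa>))})"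

end

theory Submission
  imports Defs "HOL-Complex_Analysis.Complex_Analysis"
begin

(* On the strip -\<sigma>^2/2 < Re z < \<beta> + \<sigma>^2/2, partial fractions and the symmetry of g write P
  as (G(\<gamma> - z) + G(\<sigma>^2/2 + z)) / (\<beta> + \<sigma>^2), where G w = \<integral> 1/(w + i\<omega>) dg(\<omega>) is holomorphic
  on Re w > 0 and tends to 0 as |Im w| \<rightarrow> \<infinity>. Hence P is holomorphic, small far from the real
  axis, and invariant under z \<mapsto> \<beta> - z. For \<kappa> < \<kappa>_P, P takes no value in the ray [2/\<kappa>, \<infinity>) on the
  imaginary axis, nor (by the reflection) on the line Re z = \<beta>. If it did somewhere in the strip
  0 \<le> Re z \<le> \<beta>, a point of a tall rectangle maximising Re P among those mapped into the ray would
  lie in the interior, and the open mapping theorem would push its value further along the ray.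
  Finally, the solutions of P z = 2/\<kappa> near the strip lie in a compact set disjoint from it,
  hence at positive distance \<lambda> from it. *)

section \<open>Values avoided by holomorphic functions on vertical strips\<close>

lemma closed_real_ray: "closed (complex_of_real ` {c..})"
proof -
  have "complex_of_real ` {c..} = \<real> \<inter> {t. c \<le> Re t}"
    by (auto simp: Reals_def image_iff)
  then show ?thesis
    by (simp add: closed_Int closed_complex_Reals closed_Collect_le continuous_on_Re continuous_on_const)
qed

lemma notin_real_ray_if_norm_less:
  fixes t :: complex
  assumes "norm t < c"
  shows "t \<notin> complex_of_real ` {c..}"
  using assms by auto

lemma not_constant_on_if_frontier_value_differs:
  fixes F :: "'a::euclidean_space \<Rightarrow> 'b::t1_space"
  assumes cont: "continuous_on (closure S) F" and "bounded S" "z \<in> S"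
    and frontier: "\<And>y. y \<in> frontier S \<Longrightarrow> F y \<noteq> F z"
  shows "\<not> F constant_on S"
proof
  assume "F constant_on S"
  then obtain k where k: "\<And>y. y \<in> S \<Longrightarrow> F y = k"
    by (auto simp: constant_on_def)
  have "S \<noteq> UNIV"
    using \<open>bounded S\<close> not_bounded_UNIV by blast
  then obtain y where y: "y \<in> frontier S"
    using \<open>z \<in> S\<close> frontier_eq_empty by blast
  then have "F y = F z"
    using continuous_constant_on_closure[OF cont k] k \<open>z \<in> S\<close> by (simp add: frontier_def)
  with frontier[OF y] show False ..
qed

text \<open>Maximise Re F over the compact set of points mapped into the ray: a maximiser
  off the frontier would contradict the open mapping theorem.\<close>

lemma holomorphic_avoids_ray_on_closure:
  fixes F :: "complex \<Rightarrow> complex"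
  assumes hol: "F holomorphic_on S" and cont: "continuous_on (closure S) F"
    and S: "open S" "connected S" "bounded S"
    and frontier: "\<And>y. y \<in> frontier S \<Longrightarrow> F y \<notin> complex_of_real ` {c..}"
    and z: "z \<in> closure S"
  shows "F z \<notin> complex_of_real ` {c..}"
proof
  assume Fz: "F z \<in> complex_of_real ` {c..}"
  define Z where "Z = closure S \<inter> F -` complex_of_real ` {c..}"
  have "compact Z"
    unfolding compact_eq_bounded_closed
  proof
    show "bounded Z"
      using bounded_closure[OF S(3)] by (rule bounded_subset) (auto simp: Z_def)
    show "closed Z"
      unfolding Z_def by (rule continuous_closed_preimage[OF cont closed_closure closed_real_ray])
  qed
  moreover have "continuous_on Z (\<lambda>y. Re (F y))"
    by (intro continuous_intros continuous_on_subset[OF cont]) (auto simp: Z_def)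
  moreover have "z \<in> Z"
    using z Fz by (simp add: Z_def)
  ultimately obtain z0 where "z0 \<in> Z" and z0_max: "\<And>y. y \<in> Z \<Longrightarrow> Re (F y) \<le> Re (F z0)"
    using continuous_attains_sup[of Z "\<lambda>y. Re (F y)"] by blast
  then obtain x where z0: "z0 \<in> closure S" "F z0 = complex_of_real x" "c \<le> x"
    by (auto simp: Z_def)
  then have "z0 \<in> S"
    using frontier[of z0] S(1) by (auto simp: frontier_def interior_open)
  have "F y \<noteq> F z0" if "y \<in> frontier S" for y
    using frontier[OF that] z0(2,3) by auto
  then have "\<not> F constant_on S"
    by (rule not_constant_on_if_frontier_value_differs[OF cont S(3) \<open>z0 \<in> S\<close>])
  then have "open (F ` S)"
    by (rule open_mapping_thm[OF hol S(1,2) S(1) subset_refl])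
  then obtain \<epsilon> where "\<epsilon> > 0" and \<epsilon>: "ball (F z0) \<epsilon> \<subseteq> F ` S"
    using \<open>z0 \<in> S\<close> open_contains_ball by blast
  have "F z0 + complex_of_real (\<epsilon> / 2) \<in> ball (F z0) \<epsilon>"
    using \<open>\<epsilon> > 0\<close> by (simp add: dist_norm)
  then obtain z1 where "z1 \<in> S" and z1: "F z1 = complex_of_real (x + \<epsilon> / 2)"
    using \<epsilon> z0(2) by force
  moreover have "F z1 \<in> complex_of_real ` {c..}"
    using z1 z0(3) \<open>\<epsilon> > 0\<close> by (intro image_eqI[where x = "x + \<epsilon> / 2"]) auto
  ultimately have "z1 \<in> Z"
    using closure_subset by (auto simp: Z_def)
  then show False
    using z0_max[of z1] z0(2) z1 \<open>\<epsilon> > 0\<close> by simp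
qed

lemma holomorphic_strip_avoids_ray:
  fixes F :: "complex \<Rightarrow> complex"
  assumes hol: "F holomorphic_on {z. a \<le> Re z \<and> Re z \<le> b}"
    and small: "\<And>z. a \<le> Re z \<Longrightarrow> Re z \<le> b \<Longrightarrow> R \<le> \<bar>Im z\<bar> \<Longrightarrow> norm (F z) < c"
    and edges: "\<And>z. Re z = a \<or> Re z = b \<Longrightarrow> F z \<notin> complex_of_real ` {c..}"
    and z: "a \<le> Re z" "Re z \<le> b"
  shows "F z \<notin> complex_of_real ` {c..}"
proof (cases "Re z = a \<or> Re z = b")
  case True
  then show ?thesis by (rule edges)
next
  case False
  define h where "h = \<bar>R\<bar> + \<bar>Im z\<bar> + 1"
  define S where "S = box (Complex a (- h)) (Complex b h)"
  have "z \<in> S"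
    using z False by (auto simp: S_def h_def in_box_complex_iff)
  then have closure_S: "closure S = cbox (Complex a (- h)) (Complex b h)"
    unfolding S_def by (intro closure_box) auto
  have strip: "closure S \<subseteq> {z. a \<le> Re z \<and> Re z \<le> b}"
    by (auto simp: closure_S in_cbox_complex_iff)
  show ?thesis
  proof (rule holomorphic_avoids_ray_on_closure[of F S])
    show "F holomorphic_on S"
      by (rule holomorphic_on_subset[OF hol]) (use strip closure_subset in blast)
    show "continuous_on (closure S) F"
      using holomorphic_on_imp_continuous_on[OF hol] strip by (rule continuous_on_subset)
    show "open S" "connected S" "bounded S"
      by (simp_all add: S_def open_box convex_connected bounded_box)
    show "z \<in> closure S"
      using \<open>z \<in> S\<close> closure_subset by blast
  next
    fix y
    assume "y \<in> frontier S"
    then have "y \<in> closure S" "y \<notin> S"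
      by (auto simp: frontier_def interior_open S_def open_box)
    then have "y \<in> cbox (Complex a (- h)) (Complex b h)" "y \<notin> box (Complex a (- h)) (Complex b h)"
      using closure_S unfolding S_def by auto
    then have "a \<le> Re y" "Re y \<le> b" "Re y = a \<or> Re y = b \<or> R \<le> \<bar>Im y\<bar>"
      unfolding h_def in_cbox_complex_iff in_box_complex_iff by auto
    then show "F y \<notin> complex_of_real ` {c..}"
      using edges notin_real_ray_if_norm_less small by blast
  qed
qed

text \<open>The solutions of F z = c of bounded imaginary part form a compact set, which
  keeps a positive distance from the closed strip where they are excluded.\<close>

lemma strip_avoidance_extends:
  fixes F :: "complex \<Rightarrow> complex"
  assumes cont: "continuous_on {z. a - m \<le> Re z \<and> Re z \<le> b + m} F" and "0 < m" "a \<le> b"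
    and small: "\<And>z. a - m \<le> Re z \<Longrightarrow> Re z \<le> b + m \<Longrightarrow> R \<le> \<bar>Im z\<bar> \<Longrightarrow> norm (F z) < norm c"
    and strip: "\<And>z. a \<le> Re z \<Longrightarrow> Re z \<le> b \<Longrightarrow> F z \<noteq> c"
  shows "\<exists>lam. 0 < lam \<and> lam < m \<and> (\<forall>z. a - lam \<le> Re z \<and> Re z \<le> b + lam \<longrightarrow> F z \<noteq> c)"
proof -
  define Q where "Q = cbox (Complex (a - m) (- R)) (Complex (b + m) R)"
  define K where "K = {z \<in> Q. F z = c}"
  have "Q \<subseteq> {z. a - m \<le> Re z \<and> Re z \<le> b + m}"
    by (auto simp: Q_def in_cbox_complex_iff)
  then have "closed K"
    unfolding K_def Q_def
    by (intro continuous_closed_preimage_constant continuous_on_subset[OF cont] closed_cbox)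
  then have "compact K"
    unfolding compact_eq_bounded_closed
    by (auto simp: K_def Q_def intro: bounded_subset[OF bounded_cbox])
  moreover have "closed {z. a \<le> Re z \<and> Re z \<le> b}"
    by (intro closed_Collect_conj closed_Collect_le continuous_intros)
  moreover have "K \<inter> {z. a \<le> Re z \<and> Re z \<le> b} = {}"
    using strip by (auto simp: K_def)
  ultimately obtain d where "d > 0" and d: "\<And>x y. x \<in> K \<Longrightarrow> a \<le> Re y \<Longrightarrow> Re y \<le> b \<Longrightarrow> d \<le> dist x y"
    using separate_compact_closed by (metis (no_types, lifting) mem_Collect_eq)
  define lam where "lam = min (m / 2) (d / 2)"
  have "0 < lam" "lam < m"
    using \<open>0 < m\<close> \<open>d > 0\<close> by (auto simp: lam_def)
  show ?thesis
  proof (intro exI[of _ lam] conjI allI impI notI)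
    show "0 < lam" "lam < m" by fact+
    fix z
    assume z: "a - lam \<le> Re z \<and> Re z \<le> b + lam" and "F z = c"
    then have "\<bar>Im z\<bar> < R"
      using small[of z] \<open>0 < m\<close> by (force simp: lam_def)
    with z \<open>F z = c\<close> \<open>0 < m\<close> have "z \<in> K"
      by (auto simp: K_def Q_def lam_def in_cbox_complex_iff)
    define y where "y = Complex (max a (min b (Re z))) (Im z)"
    have "z - y = complex_of_real (Re z - max a (min b (Re z)))"
      by (simp add: y_def complex_eq_iff)
    then have "dist z y = \<bar>Re z - max a (min b (Re z))\<bar>"
      by (simp only: dist_norm norm_of_real)
    also have "\<dots> \<le> lam"
      using z \<open>a \<le> b\<close> \<open>0 < lam\<close> by (simp add: max_def min_def)
    finally have "dist z y \<le> lam" .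
    moreover have "d \<le> dist z y"
      using d[OF \<open>z \<in> K\<close>, of y] \<open>a \<le> b\<close> by (simp add: y_def)
    ultimately show False
      using \<open>d > 0\<close> by (simp add: lam_def)
  qed
qed

lemma holomorphic_strip_avoids_value_nearby:
  fixes F :: "complex \<Rightarrow> complex"
  assumes hol: "F holomorphic_on {z. a - m \<le> Re z \<and> Re z \<le> b + m}" and "0 < m" "a \<le> b"
    and small: "\<And>z. a - m \<le> Re z \<Longrightarrow> Re z \<le> b + m \<Longrightarrow> R \<le> \<bar>Im z\<bar> \<Longrightarrow> norm (F z) < c"
    and edges: "\<And>z. Re z = a \<or> Re z = b \<Longrightarrow> F z \<notin> complex_of_real ` {c..}"
  shows "\<exists>lam. 0 < lam \<and> lam < m \<and>
           (\<forall>z. a - lam \<le> Re z \<and> Re z \<le> b + lam \<longrightarrow> F z \<noteq> complex_of_real c)"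
proof (rule strip_avoidance_extends)
  show "continuous_on {z. a - m \<le> Re z \<and> Re z \<le> b + m} F"
    using hol by (rule holomorphic_on_imp_continuous_on)
  show "norm (F z) < norm (complex_of_real c)"
    if "a - m \<le> Re z" "Re z \<le> b + m" "R \<le> \<bar>Im z\<bar>" for z
    using small[OF that] norm_ge_zero[of "F z"] by simp
  show "F z \<noteq> complex_of_real c" if "a \<le> Re z" "Re z \<le> b" for z
  proof -
    have "F z \<notin> complex_of_real ` {c..}"
      by (rule holomorphic_strip_avoids_ray[OF holomorphic_on_subset[OF hol] small edges that])
        (use \<open>0 < m\<close> in auto)
    then show ?thesis
      by auto
  qed
qed (use assms in auto)

section \<open>The Cauchy transform of a distribution on the real line\<close>

lemma inverse_difference_quotient:
  fixes a b :: "'a::field"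
  assumes "a \<noteq> 0" "b \<noteq> 0" "b \<noteq> a"
  shows "(1 / b - 1 / a) / (b - a) + (1 / a)\<^sup>2 = (b - a) * ((1 / a)\<^sup>2 * (1 / b))"
  using assms by (simp add: field_simps power2_eq_square)

lemma inverse_product_partial_fractions:
  fixes a b :: "'a::field"
  assumes "a \<noteq> 0" "b \<noteq> 0" "a + b \<noteq> 0"
  shows "1 / (a * b) = (1 / a + 1 / b) / (a + b)"
  using assms by (simp add: add_frac_eq add.commute)

lemma (in prob_space) norm_integral_le_const:
  fixes f :: "'a \<Rightarrow> 'b::{banach, second_countable_topology}"
  assumes "integrable M f" "\<And>x. norm (f x) \<le> B"
  shows "norm (integral\<^sup>L M f) \<le> B"
proof -
  have "norm (integral\<^sup>L M f) \<le> (\<integral>x. norm (f x) \<partial>M)"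
    by (rule integral_norm_bound)
  also have "\<dots> \<le> B"
    using assms by (intro integral_le_const) auto
  finally show ?thesis .
qed

lemma norm_cauchy_kernel_le:
  assumes "0 < Re w"
  shows "norm (1 / (w + \<i> * complex_of_real \<omega>)) \<le> 1 / Re w"
  using complex_Re_le_cmod[of "w + \<i> * complex_of_real \<omega>"] assms by (simp add: norm_divide frac_le)

lemma norm_cauchy_kernel_decay:
  fixes w :: complex
  assumes "0 < m" "m \<le> Re w"
  shows "norm (1 / (w + \<i> * complex_of_real \<omega>)) \<le> (1 + 1 / m) * (1 + \<bar>\<omega>\<bar>) / (1 + \<bar>Im w\<bar>)"
proof -
  define a where "a = w + \<i> * complex_of_real \<omega>"
  have "m \<le> norm a"
    using assms complex_Re_le_cmod[of a] by (simp add: a_def)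
  have "1 + \<bar>Im w\<bar> \<le> 1 + \<bar>\<omega>\<bar> + norm a"
    using abs_Im_le_cmod[of a] by (simp add: a_def)
  also have "\<dots> \<le> 1 + \<bar>\<omega>\<bar> + norm a + \<bar>\<omega>\<bar> * norm a"
    by simp
  also have "\<dots> = (1 + \<bar>\<omega>\<bar>) * (1 + norm a)"
    by (simp add: algebra_simps)
  also have "\<dots> \<le> (1 + \<bar>\<omega>\<bar>) * ((1 + 1 / m) * norm a)"
    using \<open>m \<le> norm a\<close> assms(1) by (intro mult_left_mono) (simp_all add: algebra_simps)
  finally have "1 + \<bar>Im w\<bar> \<le> (1 + 1 / m) * (1 + \<bar>\<omega>\<bar>) * norm a"
    by (simp add: ac_simps)
  then show ?thesis
    using \<open>m \<le> norm a\<close> assms(1)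
    by (simp add: a_def norm_divide divide_simps mult_ac)
qed

text \<open>With the Stieltjes transform \<open>S(\<zeta>) = \<integral> 1/(\<zeta> - \<omega>) dM(\<omega>)\<close> this is \<open>i S(i w)\<close>; the
  rotation makes the right half-plane its natural domain.\<close>

definition cauchy_transform :: "real measure \<Rightarrow> complex \<Rightarrow> complex" where
  "cauchy_transform M w = (LINT \<omega>|M. 1 / (w + \<i> * complex_of_real \<omega>))"

context real_distribution
begin

lemma integrable_cauchy_kernel:
  assumes "0 < Re w"
  shows "integrable M (\<lambda>\<omega>. 1 / (w + \<i> * complex_of_real \<omega>))"
  by (rule integrable_const_bound[where B = "1 / Re w"])
    (use assms norm_cauchy_kernel_le in auto)

lemma cauchy_transform_difference_quotient:
  assumes "0 < Re w" "Re w / 2 < Re v" "v \<noteq> w"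
  shows "norm ((cauchy_transform M v - cauchy_transform M w) / (v - w)
               + (LINT \<omega>|M. (1 / (w + \<i> * complex_of_real \<omega>))\<^sup>2))
         \<le> 2 / Re w ^ 3 * norm (v - w)"
proof -
  define k where "k v \<omega> = 1 / (v + \<i> * complex_of_real \<omega>)" for v \<omega>
  define r where "r = Re w"
  have "0 < r" "0 < Re v"
    using assms(1,2) by (simp_all add: r_def)
  have k_bound: "norm (k u \<omega>) \<le> 1 / Re u" if "0 < Re u" for u \<omega>
    unfolding k_def using that by (rule norm_cauchy_kernel_le)
  have "integrable M (\<lambda>\<omega>. (k w \<omega>)\<^sup>2)"
    by (rule integrable_const_bound[where B = "(1 / r)\<^sup>2"])
      (use k_bound assms(1) in \<open>auto simp: r_def norm_power k_def intro: power_mono\<close>)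
  then have "(cauchy_transform M v - cauchy_transform M w) / (v - w) + (LINT \<omega>|M. (k w \<omega>)\<^sup>2)
      = (LINT \<omega>|M. (k v \<omega> - k w \<omega>) / (v - w) + (k w \<omega>)\<^sup>2)"
    using integrable_cauchy_kernel[OF \<open>0 < Re v\<close>] integrable_cauchy_kernel[OF assms(1)]
    by (simp add: cauchy_transform_def k_def[abs_def])
  also have "\<dots> = (v - w) * (LINT \<omega>|M. (k w \<omega>)\<^sup>2 * k v \<omega>)"
  proof -
    have "v + \<i> * complex_of_real \<omega> \<noteq> 0" "w + \<i> * complex_of_real \<omega> \<noteq> 0" for \<omega>
      using \<open>0 < Re v\<close> assms(1) by (auto simp: complex_eq_iff)
    then have "(k v \<omega> - k w \<omega>) / (v - w) + (k w \<omega>)\<^sup>2 = (v - w) * ((k w \<omega>)\<^sup>2 * k v \<omega>)" for \<omega>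
      using inverse_difference_quotient[of "w + \<i> * complex_of_real \<omega>" "v + \<i> * complex_of_real \<omega>"] assms(3)
      by (simp add: k_def)
    then show ?thesis
      by simp
  qed
  finally have eq: "(cauchy_transform M v - cauchy_transform M w) / (v - w) + (LINT \<omega>|M. (k w \<omega>)\<^sup>2)
      = (v - w) * (LINT \<omega>|M. (k w \<omega>)\<^sup>2 * k v \<omega>)" .
  have "1 / Re v \<le> 2 / r"
    using assms(2) \<open>0 < r\<close> by (simp add: r_def field_simps)
  then have bound: "norm ((k w \<omega>)\<^sup>2 * k v \<omega>) \<le> (1 / r)\<^sup>2 * (2 / r)" for \<omega>
    using k_bound[OF assms(1), of \<omega>] k_bound[OF \<open>0 < Re v\<close>, of \<omega>] \<open>0 < r\<close>
    unfolding norm_mult norm_power r_def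
    by (intro mult_mono power_mono) auto
  then have "integrable M (\<lambda>\<omega>. (k w \<omega>)\<^sup>2 * k v \<omega>)"
    by (intro integrable_const_bound[where B = "(1 / r)\<^sup>2 * (2 / r)"]) (auto simp: k_def)
  then have "norm (LINT \<omega>|M. (k w \<omega>)\<^sup>2 * k v \<omega>) \<le> (1 / r)\<^sup>2 * (2 / r)"
    using bound by (rule norm_integral_le_const)
  then have "norm (v - w) * norm (LINT \<omega>|M. (k w \<omega>)\<^sup>2 * k v \<omega>) \<le> norm (v - w) * ((1 / r)\<^sup>2 * (2 / r))"
    by (rule mult_left_mono) simp
  then show ?thesis
    unfolding k_def[symmetric] r_def[symmetric] eq norm_mult
    by (simp add: power3_eq_cube power2_eq_square mult_ac)
qed

lemma cauchy_transform_has_field_derivative: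
  assumes "0 < Re w"
  shows "(cauchy_transform M has_field_derivative
           - (LINT \<omega>|M. (1 / (w + \<i> * complex_of_real \<omega>))\<^sup>2)) (at w)"
proof -
  define D where "D = (LINT \<omega>|M. (1 / (w + \<i> * complex_of_real \<omega>))\<^sup>2)"
  define r where "r = Re w"
  have quotient: "norm ((cauchy_transform M v - cauchy_transform M w) / (v - w) + D)
                    \<le> 2 / r ^ 3 * norm (v - w)"
    if "v \<noteq> w" "dist v w < r / 2" for v
  proof -
    have "\<bar>Re v - r\<bar> < r / 2"
      using that abs_Re_le_cmod[of "v - w"] by (simp add: r_def dist_norm)
    then have "Re w / 2 < Re v"
      unfolding r_def by linarith
    then show ?thesis
      unfolding D_def r_def by (rule cauchy_transform_difference_quotient[OF assms _ that(1)])
  qed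
  have "((\<lambda>v. (cauchy_transform M v - cauchy_transform M w) / (v - w) + D) \<longlongrightarrow> 0) (at w)"
  proof (rule Lim_null_comparison)
    show "\<forall>\<^sub>F v in at w. norm ((cauchy_transform M v - cauchy_transform M w) / (v - w) + D)
            \<le> 2 / r ^ 3 * norm (v - w)"
      unfolding eventually_at using assms quotient by (intro exI[of _ "r / 2"]) (auto simp: r_def)
    show "((\<lambda>v. 2 / r ^ 3 * norm (v - w)) \<longlongrightarrow> 0) (at w)"
      by (intro tendsto_eq_intros) (auto intro: tendsto_ident_at)
  qed
  then have "((\<lambda>v. (cauchy_transform M v - cauchy_transform M w) / (v - w)) \<longlongrightarrow> - D) (at w)"
    using LIM_zero_iff[where f = "\<lambda>v. (cauchy_transform M v - cauchy_transform M w) / (v - w)"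
        and l = "- D" and F = "at w"] by simp
  then show ?thesis
    unfolding has_field_derivative_iff D_def .
qed

lemma cauchy_transform_holomorphic: "cauchy_transform M holomorphic_on {w. 0 < Re w}"
  using cauchy_transform_has_field_derivative
  by (auto simp: holomorphic_on_def field_differentiable_def intro: has_field_derivative_at_within)

lemma cauchy_transform_vanishes:
  assumes "integrable M abs" "0 < m" "0 < \<epsilon>"
  shows "\<exists>R. \<forall>w. m \<le> Re w \<and> R \<le> \<bar>Im w\<bar> \<longrightarrow> norm (cauchy_transform M w) < \<epsilon>"
proof -
  define C where "C = (1 + 1 / m) * (1 + expectation abs)"
  have "0 \<le> expectation abs"
    by (intro integral_nonneg_AE) auto
  then have "0 \<le> C"
    using \<open>0 < m\<close> by (simp add: C_def)
  have "norm (cauchy_transform M w) \<le> C / (1 + \<bar>Im w\<bar>)" if "m \<le> Re w" for w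
  proof -
    have "norm (cauchy_transform M w) \<le> (LINT \<omega>|M. (1 + 1 / m) * (1 + \<bar>\<omega>\<bar>) / (1 + \<bar>Im w\<bar>))"
      unfolding cauchy_transform_def using assms that
      by (intro Bochner_Integration.integral_norm_bound_integral integrable_cauchy_kernel
          norm_cauchy_kernel_decay) auto
    also have "\<dots> = C / (1 + \<bar>Im w\<bar>)"
      using assms(1) by (simp add: C_def prob_space[unfolded space_eq_univ])
    finally show ?thesis .
  qed
  moreover have "C / (1 + \<bar>Im w\<bar>) < \<epsilon>" if "C / \<epsilon> \<le> \<bar>Im w\<bar>" for w
    using that \<open>0 \<le> C\<close> \<open>0 < \<epsilon>\<close> by (simp add: field_simps)
  ultimately show ?thesis
    by (meson order_le_less_trans)
qed

end

section \<open>The Penrose function of a symmetric distribution\<close>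

lemma penroseP_imaginary_axis_notin_ray:
  assumes "0 < \<kappa>" "ereal \<kappa> < kappaP g \<beta> \<sigma>"
  shows "penroseP g \<beta> \<sigma> (\<i> * complex_of_real \<theta>) \<notin> complex_of_real ` {2 / \<kappa>..}"
proof
  assume "penroseP g \<beta> \<sigma> (\<i> * complex_of_real \<theta>) \<in> complex_of_real ` {2 / \<kappa>..}"
  then obtain x where x: "2 / \<kappa> \<le> x" "penroseP g \<beta> \<sigma> (\<i> * complex_of_real \<theta>) = complex_of_real x"
    by auto
  then have "0 < x"
    using assms(1) by (smt (verit) divide_pos_pos)
  then have "penroseP g \<beta> \<sigma> (\<i> * complex_of_real \<theta>) = complex_of_real (2 / (2 / x))"
    using x(2) by simp
  with \<open>0 < x\<close> have "2 / x \<in> {\<kappa>. 0 < \<kappa> \<and>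
      (\<exists>\<theta>. penroseP g \<beta> \<sigma> (\<i> * complex_of_real \<theta>) = complex_of_real (2 / \<kappa>))}"
    by auto
  then have "kappaP g \<beta> \<sigma> \<le> ereal (2 / x)"
    unfolding kappaP_def by (rule Inf_lower[OF imageI])
  with assms(2) have "\<kappa> < 2 / x"
    using less_le_trans by fastforce
  moreover have "2 / x \<le> \<kappa>"
    using x(1) assms(1) \<open>0 < x\<close> by (simp add: field_simps)
  ultimately show False
    by simp
qed

lemma penrose_integrand_partial_fractions:
  fixes \<beta> \<sigma> \<omega> :: real
  assumes "- (\<sigma>\<^sup>2 / 2) < Re z" "Re z < \<beta> + \<sigma>\<^sup>2 / 2"
  shows "1 / ((complex_of_real (\<beta> + \<sigma>\<^sup>2 / 2) + \<i> * complex_of_real \<omega> - z)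
               * (complex_of_real (\<sigma>\<^sup>2 / 2) + z - \<i> * complex_of_real \<omega>))
         = (1 / (complex_of_real (\<beta> + \<sigma>\<^sup>2 / 2) - z + \<i> * complex_of_real \<omega>)
            + 1 / (complex_of_real (\<sigma>\<^sup>2 / 2) + z + \<i> * complex_of_real (- \<omega>)))
           / complex_of_real (\<beta> + \<sigma>\<^sup>2)"
proof -
  define A where "A = complex_of_real (\<beta> + \<sigma>\<^sup>2 / 2) - z + \<i> * complex_of_real \<omega>"
  define B where "B = complex_of_real (\<sigma>\<^sup>2 / 2) + z + \<i> * complex_of_real (- \<omega>)"
  have "0 < \<beta> + \<sigma>\<^sup>2"
    using assms by linarith
  then have "complex_of_real (\<beta> + \<sigma>\<^sup>2) \<noteq> 0"
    by (metis of_real_eq_0_iff order_less_irrefl)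
  moreover have "A \<noteq> 0" "B \<noteq> 0" and sum: "A + B = complex_of_real (\<beta> + \<sigma>\<^sup>2)"
    using assms by (auto simp: A_def B_def complex_eq_iff)
  ultimately have "1 / (A * B) = (1 / A + 1 / B) / complex_of_real (\<beta> + \<sigma>\<^sup>2)"
    unfolding sum[symmetric] by (intro inverse_product_partial_fractions) simp_all
  moreover have "(complex_of_real (\<beta> + \<sigma>\<^sup>2 / 2) + \<i> * complex_of_real \<omega> - z)
      * (complex_of_real (\<sigma>\<^sup>2 / 2) + z - \<i> * complex_of_real \<omega>) = A * B"
    by (simp add: A_def B_def algebra_simps)
  ultimately show ?thesis
    by (simp only: A_def B_def)
qed

context real_distribution
begin

lemma integral_reflect:
  fixes f :: "real \<Rightarrow> 'b::{banach, second_countable_topology}"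
  assumes "distr M borel uminus = M" "f \<in> borel_measurable borel"
  shows "(LINT \<omega>|M. f (- \<omega>)) = integral\<^sup>L M f"
  using integral_distr[of uminus M borel f] assms by simp

lemma penroseP_reflect:
  assumes "distr M borel uminus = M"
  shows "penroseP M \<beta> \<sigma> (complex_of_real \<beta> - z) = penroseP M \<beta> \<sigma> z"
  unfolding penroseP_def Let_def
  by (subst integral_reflect[OF assms, symmetric]) (simp_all add: algebra_simps)

lemma penroseP_edges_notin_ray:
  assumes "distr M borel uminus = M" "0 < \<kappa>" "ereal \<kappa> < kappaP M \<beta> \<sigma>" "Re z = 0 \<or> Re z = \<beta>"
  shows "penroseP M \<beta> \<sigma> z \<notin> complex_of_real ` {2 / \<kappa>..}"
proof -
  have "z = \<i> * complex_of_real (Im z) \<or> complex_of_real \<beta> - z = \<i> * complex_of_real (- Im z)"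
    using assms(4) by (auto simp: complex_eq_iff)
  then show ?thesis
    using penroseP_imaginary_axis_notin_ray[OF assms(2,3)] penroseP_reflect[OF assms(1), of \<beta> \<sigma> z]
    by metis
qed

lemma penroseP_eq_cauchy_transform:
  assumes "distr M borel uminus = M" "- (\<sigma>\<^sup>2 / 2) < Re z" "Re z < \<beta> + \<sigma>\<^sup>2 / 2"
  shows "penroseP M \<beta> \<sigma> z
           = (cauchy_transform M (complex_of_real (\<beta> + \<sigma>\<^sup>2 / 2) - z)
              + cauchy_transform M (complex_of_real (\<sigma>\<^sup>2 / 2) + z)) / complex_of_real (\<beta> + \<sigma>\<^sup>2)"
proof -
  define A where "A \<omega> = complex_of_real (\<beta> + \<sigma>\<^sup>2 / 2) - z + \<i> * complex_of_real \<omega>" for \<omega>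
  define B where "B \<omega> = complex_of_real (\<sigma>\<^sup>2 / 2) + z + \<i> * complex_of_real (- \<omega>)" for \<omega>
  have "penroseP M \<beta> \<sigma> z = (LINT \<omega>|M. (1 / A \<omega> + 1 / B \<omega>) / complex_of_real (\<beta> + \<sigma>\<^sup>2))"
    unfolding penroseP_def Let_def A_def B_def
    by (simp only: penrose_integrand_partial_fractions[OF assms(2,3)])
  also have "\<dots> = ((LINT \<omega>|M. 1 / A \<omega>) + (LINT \<omega>|M. 1 / B \<omega>)) / complex_of_real (\<beta> + \<sigma>\<^sup>2)"
  proof -
    have "integrable M (\<lambda>\<omega>. 1 / B \<omega>)"
    proof (rule integrable_const_bound[where B = "1 / Re (complex_of_real (\<sigma>\<^sup>2 / 2) + z)"])
      show "AE \<omega> in M. norm (1 / B \<omega>) \<le> 1 / Re (complex_of_real (\<sigma>\<^sup>2 / 2) + z)"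
        unfolding B_def using assms by (intro AE_I2 norm_cauchy_kernel_le) simp
    qed (simp add: B_def)
    moreover have "integrable M (\<lambda>\<omega>. 1 / A \<omega>)"
      unfolding A_def using assms by (intro integrable_cauchy_kernel) simp
    ultimately show ?thesis
      by simp
  qed
  also have "(LINT \<omega>|M. 1 / B \<omega>) = cauchy_transform M (complex_of_real (\<sigma>\<^sup>2 / 2) + z)"
    unfolding cauchy_transform_def B_def by (rule integral_reflect[OF assms(1)]) simp
  finally show ?thesis
    by (simp add: cauchy_transform_def A_def)
qed

lemma penroseP_holomorphic:
  assumes "distr M borel uminus = M"
  shows "penroseP M \<beta> \<sigma> holomorphic_on {z. - (\<sigma>\<^sup>2 / 2) < Re z \<and> Re z < \<beta> + \<sigma>\<^sup>2 / 2}"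
    (is "_ holomorphic_on ?U")
proof (rule holomorphic_transform)
  have transform: "(\<lambda>z. cauchy_transform M (f z)) holomorphic_on ?U"
    if "f holomorphic_on ?U" "\<And>z. z \<in> ?U \<Longrightarrow> 0 < Re (f z)" for f
    using holomorphic_on_compose_gen[OF that(1) cauchy_transform_holomorphic] that(2)
    by (auto simp: o_def)
  show "(\<lambda>z. (cauchy_transform M (complex_of_real (\<beta> + \<sigma>\<^sup>2 / 2) - z)
              + cauchy_transform M (complex_of_real (\<sigma>\<^sup>2 / 2) + z)) / complex_of_real (\<beta> + \<sigma>\<^sup>2))
        holomorphic_on ?U"
    by (intro holomorphic_intros transform) auto
  show "(cauchy_transform M (complex_of_real (\<beta> + \<sigma>\<^sup>2 / 2) - z)
          + cauchy_transform M (complex_of_real (\<sigma>\<^sup>2 / 2) + z)) / complex_of_real (\<beta> + \<sigma>\<^sup>2)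
        = penroseP M \<beta> \<sigma> z" if "z \<in> ?U" for z
    using penroseP_eq_cauchy_transform[OF assms] that by simp
qed

lemma penroseP_vanishes:
  assumes "distr M borel uminus = M" "integrable M abs"
    and "0 \<le> \<beta>" "0 < m" "m < \<sigma>\<^sup>2 / 2" "0 < \<epsilon>"
  shows "\<exists>R. \<forall>z. - m \<le> Re z \<and> Re z \<le> \<beta> + m \<and> R \<le> \<bar>Im z\<bar> \<longrightarrow> norm (penroseP M \<beta> \<sigma> z) < \<epsilon>"
proof -
  define c where "c = \<beta> + \<sigma>\<^sup>2"
  have "0 < c"
    using assms(3-5) by (simp add: c_def)
  obtain R where R: "\<And>w. \<sigma>\<^sup>2 / 2 - m \<le> Re w \<Longrightarrow> R \<le> \<bar>Im w\<bar> \<Longrightarrow> norm (cauchy_transform M w) < \<epsilon> * c / 2"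
    using cauchy_transform_vanishes[OF assms(2), of "\<sigma>\<^sup>2 / 2 - m" "\<epsilon> * c / 2"] assms(5,6) \<open>0 < c\<close>
    by auto
  show ?thesis
  proof (intro exI[of _ R] allI impI)
    fix z
    assume z: "- m \<le> Re z \<and> Re z \<le> \<beta> + m \<and> R \<le> \<bar>Im z\<bar>"
    have "norm (penroseP M \<beta> \<sigma> z)
        = norm (cauchy_transform M (complex_of_real (\<beta> + \<sigma>\<^sup>2 / 2) - z)
                + cauchy_transform M (complex_of_real (\<sigma>\<^sup>2 / 2) + z)) / c"
      using penroseP_eq_cauchy_transform[OF assms(1), of \<sigma> z \<beta>] z assms(5) \<open>0 < c\<close>
      by (simp add: c_def norm_divide del: of_real_add)
    also have "\<dots> < (\<epsilon> * c / 2 + \<epsilon> * c / 2) / c"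
      using z assms(5) \<open>0 < c\<close>
      by (intro divide_strict_right_mono norm_triangle_lt add_strict_mono R) auto
    also have "\<dots> = \<epsilon>"
      using \<open>0 < c\<close> by simp
    finally show "norm (penroseP M \<beta> \<sigma> z) < \<epsilon>" .
  qed
qed

end

theorem lemma5p2:
  fixes g :: "real measure" and \<beta> \<sigma> \<kappa> :: real
  assumes "prob_space g"
    and "sets g = sets borel"
    and "distr g borel uminus = g"
    and "integrable g (\<lambda>x. x\<^sup>2)"
    and "\<beta> > 0" and "\<sigma> > 0"
    and "\<kappa> > 0" and "ereal \<kappa> < kappaP g \<beta> \<sigma>"
  shows "\<exists>lam::real. 0 < lam \<and> lam < \<sigma>\<^sup>2 / 2 \<and>
           (\<forall>z::complex. -lam \<le> Re z \<and> Re z \<le> \<beta> + lam \<longrightarrow>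
              1 - complex_of_real (\<kappa> / 2) * penroseP g \<beta> \<sigma> z \<noteq> 0)"
proof -
  interpret real_distribution g
    using assms(1,2) by (simp add: real_distribution_def real_distribution_axioms_def)
  define s where "s = \<sigma>\<^sup>2 / 2"
  have "0 < s"
    using assms(6) by (simp add: s_def)
  have "penroseP g \<beta> \<sigma> holomorphic_on {z. 0 - s / 2 \<le> Re z \<and> Re z \<le> \<beta> + s / 2}"
    by (rule holomorphic_on_subset[OF penroseP_holomorphic[OF assms(3)]])
      (use \<open>0 < s\<close> in \<open>auto simp: s_def [symmetric]\<close>)
  moreover have "integrable g abs"
    using square_integrable_imp_integrable[of "\<lambda>x. x"] assms(4) by simp
  then obtain R where "\<And>z. 0 - s / 2 \<le> Re z \<Longrightarrow> Re z \<le> \<beta> + s / 2 \<Longrightarrow> R \<le> \<bar>Im z\<bar>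
                         \<Longrightarrow> norm (penroseP g \<beta> \<sigma> z) < 2 / \<kappa>"
    using penroseP_vanishes[OF assms(3), of \<beta> "s / 2" \<sigma> "2 / \<kappa>"] assms(5,7) \<open>0 < s\<close>
    by (auto simp: s_def)
  ultimately obtain lam where lam: "0 < lam" "lam < s / 2"
    and avoid: "\<And>z. 0 - lam \<le> Re z \<Longrightarrow> Re z \<le> \<beta> + lam \<Longrightarrow> penroseP g \<beta> \<sigma> z \<noteq> complex_of_real (2 / \<kappa>)"
    using holomorphic_strip_avoids_value_nearby[of "penroseP g \<beta> \<sigma>" 0 "s / 2" \<beta> R "2 / \<kappa>"]
      penroseP_edges_notin_ray[OF assms(3,7,8)] \<open>0 < s\<close> assms(5)
    by auto
  have "1 - complex_of_real (\<kappa> / 2) * w \<noteq> 0" if "w \<noteq> complex_of_real (2 / \<kappa>)" for w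
    using that assms(7) by (auto simp: field_simps)
  then show ?thesis
    using lam avoid by (intro exI[of _ lam]) (auto simp: s_def)
qed

end
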